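(* $D(19,\{3,4\})\le 35$; equivalently, there exists a $\{K_3,K_4\}$-decomposition of $K_{19}$ with $\alpha\le 13$ (indeed one with $13$ copies of $K_3$ and $22$ copies of $K_4$).
   Context: A $\{K_3,K_4\}$-decomposition of $K_v$ is a collection of subgraphs, each isomorphic to $K_3$ or $K_4$, such that every edge of $K_v$ lies in exactly one of them. $\alpha$ and $\beta$ denote the numbers of copies of $K_3$ and $K_4$ in the decomposition (so $3\alpha+6\beta=\binom{v}{2}$). $D(v,\{3,4\})$ is the minimum of $\alpha+\beta$ over all such decompositions of $K_v$. *)

theory Defs
  imports Main
begin

text \<open>K_v has vertex set {0..<v}; a copy of K_3 / K_4 in K_v is determined by its
vertex set, a 3- or 4-subset of {0..<v}.\<close>

definition K34_decomp :: "nat \<Rightarrow> nat set set \<Rightarrow> bool" where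
  "K34_decomp v B \<longleftrightarrow>
     (\<forall>b\<in>B. b \<subseteq> {..<v} \<and> (card b = 3 \<or> card b = 4)) \<and>
     (\<forall>x<v. \<forall>y<v. x \<noteq> y \<longrightarrow> (\<exists>!b. b \<in> B \<and> {x, y} \<subseteq> b))"

definition num_K3 :: "nat set set \<Rightarrow> nat" where
  "num_K3 B = card {b \<in> B. card b = 3}"

definition num_K4 :: "nat set set \<Rightarrow> nat" where
  "num_K4 B = card {b \<in> B. card b = 4}"

definition D34 :: "nat \<Rightarrow> nat" where
  "D34 v = (LEAST n. \<exists>B. K34_decomp v B \<and> n = num_K3 B + num_K4 B)"

end

theory Submission
  imports Defs
begin

text \<open>The witness is an explicit list of 13 triangles and 22 copies of \<open>K\<^sub>4\<close>
(\<open>13 * 3 + 22 * 6 = 171\<close> edges); that every edge of \<open>K\<^sub>1\<^sub>9\<close> lies in exactly one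
block is checked by evaluation over all vertex pairs.\<close>

lemma D34_le_num_blocks:
  assumes "K34_decomp v B"
  shows "D34 v \<le> num_K3 B + num_K4 B"
  unfolding D34_def by (rule Least_le) (use assms in blast)

lemma card_blocks_with_card:
  fixes bs :: "'a::linorder list list"
  assumes "\<forall>l\<in>set bs. sorted_wrt (<) l" and "distinct bs"
  shows "card {b \<in> set ` set bs. card b = k} = length (filter (\<lambda>l. length l = k) bs)"
proof -
  have card_set: "card (set l) = length l" if "l \<in> set bs" for l
    using assms(1) that by (simp add: strict_sorted_iff distinct_card)
  have "{b \<in> set ` set bs. card b = k} = set ` set (filter (\<lambda>l. length l = k) bs)"
    using card_set by auto
  moreover have "inj_on set (set (filter (\<lambda>l. length l = k) bs))"
    using assms(1) by (auto intro: inj_onI strict_sorted_equal)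
  ultimately show ?thesis
    using assms(2) by (metis card_image distinct_card distinct_filter)
qed

lemma ex1_block_if_unique_list:
  assumes "length (filter (\<lambda>l. x \<in> set l \<and> y \<in> set l) bs) = 1"
  shows "\<exists>!b. b \<in> set ` set bs \<and> {x, y} \<subseteq> b"
proof -
  obtain l0 where l0: "filter (\<lambda>l. x \<in> set l \<and> y \<in> set l) bs = [l0]"
    using assms by (metis length_0_conv length_Suc_conv One_nat_def)
  then have "l0 \<in> set (filter (\<lambda>l. x \<in> set l \<and> y \<in> set l) bs)"
    by simp
  then have "l0 \<in> set bs" "x \<in> set l0" "y \<in> set l0"
    by simp_all
  moreover have "b = set l0" if b: "b \<in> set ` set bs" "{x, y} \<subseteq> b" for b
  proof -
    obtain l where "l \<in> set bs" "b = set l" using b(1) by blast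
    with b(2) have "l \<in> set (filter (\<lambda>l. x \<in> set l \<and> y \<in> set l) bs)" by simp
    with l0 \<open>b = set l\<close> show ?thesis by simp
  qed
  ultimately show ?thesis by (intro ex1I[of _ "set l0"]) auto
qed

lemma K34_decomp_of_lists:
  assumes "\<forall>l\<in>set bs. set l \<subseteq> {..<v} \<and> (card (set l) = 3 \<or> card (set l) = 4)"
    and "\<forall>x<v. \<forall>y<v. x \<noteq> y \<longrightarrow> length (filter (\<lambda>l. x \<in> set l \<and> y \<in> set l) bs) = 1"
  shows "K34_decomp v (set ` set bs)"
  unfolding K34_decomp_def
proof (intro conjI ballI allI impI)
  fix b assume "b \<in> set ` set bs"
  with assms(1) show "b \<subseteq> {..<v}" and "card b = 3 \<or> card b = 4" by auto
next
  fix x y assume "x < v" "y < v" "x \<noteq> y"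
  with assms(2) show "\<exists>!b. b \<in> set ` set bs \<and> {x, y} \<subseteq> b"
    by (intro ex1_block_if_unique_list) blast
qed

definition K19_blocks :: "nat list list" where
  "K19_blocks =
    [[0,4,6,13], [1,5,6,17], [6,9,12,16], [6,8,10,11], [2,6,14,15], [3,6,7,18],
     [4,12,15,18], [0,5,8,15], [10,15,16,17], [1,3,11,15], [7,9,13,15], [2,5,9,11],
     [11,12,13,14], [4,7,11,17], [0,11,16,18], [8,13,16], [1,10,13], [3,5,13],
     [2,13,17,18], [5,10,14,18], [1,8,9,18], [5,7,12], [4,5,16], [1,2,7,16], [3,14,16],
     [7,8,14], [0,7,10], [1,4,14], [0,1,12], [0,9,14,17], [0,2,3], [3,8,12,17],
     [2,10,12], [2,4,8], [3,4,9,10]]"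

lemma K19_blocks_sorted: "\<forall>l\<in>set K19_blocks. sorted_wrt (<) l"
  unfolding K19_blocks_def by simp

lemma K19_blocks_distinct: "distinct K19_blocks"
  unfolding K19_blocks_def by simp

lemma K19_blocks_decomp: "K34_decomp 19 (set ` set K19_blocks)"
proof (rule K34_decomp_of_lists)
  show "\<forall>l\<in>set K19_blocks. set l \<subseteq> {..<19} \<and> (card (set l) = 3 \<or> card (set l) = 4)"
    unfolding K19_blocks_def by simp
  have "\<forall>x\<in>set [0..<19]. \<forall>y\<in>set [0..<19]. x \<noteq> y \<longrightarrow>
      length (filter (\<lambda>l. x \<in> set l \<and> y \<in> set l) K19_blocks) = 1"
    unfolding K19_blocks_def by code_simp \<comment> \<open>needs the quantifiers bounded by a list\<close>
  then show "\<forall>x<19. \<forall>y<19. x \<noteq> y \<longrightarrow>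
      length (filter (\<lambda>l. x \<in> set l \<and> y \<in> set l) K19_blocks) = 1"
    by (simp only: set_upt Ball_def atLeastLessThan_iff le0 simp_thms)
qed

lemma num_K3_K19_blocks: "num_K3 (set ` set K19_blocks) = 13"
  unfolding num_K3_def card_blocks_with_card[OF K19_blocks_sorted K19_blocks_distinct]
  unfolding K19_blocks_def by simp

lemma num_K4_K19_blocks: "num_K4 (set ` set K19_blocks) = 22"
  unfolding num_K4_def card_blocks_with_card[OF K19_blocks_sorted K19_blocks_distinct]
  unfolding K19_blocks_def by simp

theorem mainTheorem18:
  shows "D34 19 \<le> 35 \<and> (\<exists>B. K34_decomp 19 B \<and> num_K3 B = 13 \<and> num_K4 B = 22)"
  using D34_le_num_blocks[OF K19_blocks_decomp] K19_blocks_decomp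
    num_K3_K19_blocks num_K4_K19_blocks
  by auto

end
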